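(* For every $n\equiv 2\pmod 4$ with $n\ge 6$, there exists a Heffter array $H(n;5)$.
   Context: A Heffter array $H(n;k)$ is an $n\times n$ array in which some cells are filled with nonzero integers and the others are empty, such that: each row and each column contains exactly $k$ filled cells; the entries of every row and of every column sum to $0$ modulo $2nk+1$; and for each integer $1\le x\le nk$, exactly one of $x$ or $-x$ appears in the array, and it appears exactly once. *)

theory Defs
  imports Main
begin

text \<open>An n x n partially filled array: rows and columns indexed by 0..<n,
  cell (i,j) is None if empty and Some e if filled with the integer e.\<close>

definition heffter :: "nat \<Rightarrow> nat \<Rightarrow> (nat \<Rightarrow> nat \<Rightarrow> int option) \<Rightarrow> bool" where
  "heffter n k A \<longleftrightarrow>
     (\<forall>i j. A i j \<noteq> None \<longrightarrow> i < n \<and> j < n) \<and>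
     (\<forall>i j e. A i j = Some e \<longrightarrow> e \<noteq> 0) \<and>
     (\<forall>i<n. card {j. j < n \<and> A i j \<noteq> None} = k) \<and>
     (\<forall>j<n. card {i. i < n \<and> A i j \<noteq> None} = k) \<and>
     (\<forall>i<n. (\<Sum>j\<in>{j. j < n \<and> A i j \<noteq> None}. the (A i j)) mod (2 * int n * int k + 1) = 0) \<and>
     (\<forall>j<n. (\<Sum>i\<in>{i. i < n \<and> A i j \<noteq> None}. the (A i j)) mod (2 * int n * int k + 1) = 0) \<and>
     (\<forall>x::int. 1 \<le> x \<and> x \<le> int n * int k \<longrightarrow>
        (\<exists>!p. p \<in> {0..<n} \<times> {0..<n} \<and>
              (A (fst p) (snd p) = Some x \<or> A (fst p) (snd p) = Some (- x))))"

definition heffter_exists :: "nat \<Rightarrow> nat \<Rightarrow> bool" where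
  "heffter_exists n k \<longleftrightarrow> (\<exists>A. heffter n k A)"

end

theory Submission
  imports Defs "HOL-Combinatorics.Transposition"
begin

text \<open>The array is a cyclic band: for \<open>n = 2N\<close>, row \<open>i\<close> is filled exactly in the columns
  \<open>i, i + 1, \<dots>, i + 4 (mod n)\<close>. Row \<open>2a\<close> carries \<open>1 + a, 2N + 1 + a, -(5N + 2 + 2a), 4N + 1 + a,
  -(N + 1 + a)\<close> and row \<open>2a + 1\<close> carries \<open>8N - a, -(10N - a), -(5N + 1 + 2a), -(4N - a), -(9N - a)\<close>,
  so every row sums to \<open>0\<close> or \<open>-(20N + 1)\<close>. As \<open>a\<close> runs through \<open>0..<N\<close>, the absolute values
  of these ten families tile \<open>1..10N\<close>. A column collects the entries of five consecutive rows on
  the five diagonals, and away from the wrap-around these again sum to \<open>0\<close> or \<open>-(20N + 1)\<close>;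
  exchanging the entries on diagonals 1 and 4 of the last row repairs the columns that wrap
  around.\<close>

lemma mod_eq_self_or_diff:
  assumes "(x::nat) < 2 * n"
  shows "x mod n = (if x < n then x else x - n)"
  using assms le_mod_geq[of n x] by (auto intro: mod_less)

lemma mod_add_sub_eq_if:
  assumes "(j::nat) < n" "d \<le> n"
  shows "(j + n - d) mod n = (if d \<le> j then j - d else j + n - d)"
  using assms mod_eq_self_or_diff[of "j + n - d" n] by auto

definition diagonal_index :: "nat \<Rightarrow> nat \<Rightarrow> nat \<Rightarrow> nat" where
  "diagonal_index n i j = (j + n - i) mod n"

lemma diagonal_index_eq_iff_col:
  assumes "i < n" "j < n" "d < n"
  shows "diagonal_index n i j = d \<longleftrightarrow> j = (i + d) mod n"
proof -
  have "(j + n - i) mod n = (if j + n - i < n then j + n - i else j - i)"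
    "(i + d) mod n = (if i + d < n then i + d else i + d - n)"
    using assms by (simp_all add: mod_eq_self_or_diff)
  then show ?thesis
    using assms unfolding diagonal_index_def by auto
qed

lemma diagonal_index_eq_iff_row:
  assumes "i < n" "j < n" "d < n"
  shows "diagonal_index n i j = d \<longleftrightarrow> i = (j + n - d) mod n"
proof -
  have "(j + n - i) mod n = (if j + n - i < n then j + n - i else j - i)"
    "(j + n - d) mod n = (if j + n - d < n then j + n - d else j - d)"
    using assms by (simp_all add: mod_eq_self_or_diff)
  then show ?thesis
    using assms unfolding diagonal_index_def by auto
qed

text \<open>\<open>f i d\<close> is the entry of row \<open>i\<close> on the \<open>d\<close>-th cyclic diagonal, i.e.\ in column \<open>(i + d) mod n\<close>;
  only the diagonals \<open>d < k\<close> are filled.\<close>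

definition band_array :: "nat \<Rightarrow> nat \<Rightarrow> (nat \<Rightarrow> nat \<Rightarrow> int) \<Rightarrow> nat \<Rightarrow> nat \<Rightarrow> int option" where
  "band_array n k f i j =
     (if i < n \<and> j < n \<and> diagonal_index n i j < k then Some (f i (diagonal_index n i j)) else None)"

lemma band_array_on_diagonal:
  assumes "k \<le> n" "i < n" "d < k"
  shows "band_array n k f i ((i + d) mod n) = Some (f i d)"
  using assms diagonal_index_eq_iff_col[of i n "(i + d) mod n" d] by (simp add: band_array_def)

lemma band_array_eq_Some_iff:
  assumes "k \<le> n"
  shows "band_array n k f i j = Some e \<longleftrightarrow> (\<exists>d<k. i < n \<and> j = (i + d) mod n \<and> e = f i d)"
proof
  assume "band_array n k f i j = Some e"
  then have "i < n" "j < n" "diagonal_index n i j < k" "e = f i (diagonal_index n i j)"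
    by (auto simp: band_array_def split: if_splits)
  with assms show "\<exists>d<k. i < n \<and> j = (i + d) mod n \<and> e = f i d"
    using diagonal_index_eq_iff_col[of i n j "diagonal_index n i j"] by auto
qed (use assms band_array_on_diagonal in blast)

lemma band_array_row_support:
  assumes "k \<le> n" "i < n"
  shows "{j. j < n \<and> band_array n k f i j \<noteq> None} = (\<lambda>d. (i + d) mod n) ` {..<k}"
  using assms band_array_eq_Some_iff[OF assms(1)] by fastforce

lemma band_array_col_support:
  assumes "k \<le> n" "j < n"
  shows "{i. i < n \<and> band_array n k f i j \<noteq> None} = (\<lambda>d. (j + n - d) mod n) ` {..<k}"
proof -
  have diag: "j = (i + d) mod n \<longleftrightarrow> i = (j + n - d) mod n" if "i < n" "d < k" for i d
    using that assms diagonal_index_eq_iff_col[of i n j d] diagonal_index_eq_iff_row[of i n j d]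
    by simp
  show ?thesis
  proof (intro set_eqI iffI)
    fix i assume "i \<in> {i. i < n \<and> band_array n k f i j \<noteq> None}"
    then obtain d where "d < k" "i < n" "j = (i + d) mod n"
      using band_array_eq_Some_iff[OF assms(1)] by blast
    with diag show "i \<in> (\<lambda>d. (j + n - d) mod n) ` {..<k}"
      by blast
  next
    fix i assume "i \<in> (\<lambda>d. (j + n - d) mod n) ` {..<k}"
    then obtain d where d: "d < k" "i = (j + n - d) mod n"
      by blast
    then have "i < n"
      using assms by simp
    with d diag have "band_array n k f i j = Some (f i d)"
      using band_array_on_diagonal[OF assms(1)] by metis
    with \<open>i < n\<close> show "i \<in> {i. i < n \<and> band_array n k f i j \<noteq> None}"
      by simp
  qed
qed

lemma inj_on_band_row:
  assumes "k \<le> (n::nat)" "i < n"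
  shows "inj_on (\<lambda>d. (i + d) mod n) {..<k}"
  by (rule inj_on_inverseI[where g = "diagonal_index n i"])
    (use assms diagonal_index_eq_iff_col in auto)

lemma inj_on_band_col:
  assumes "k \<le> (n::nat)" "j < n"
  shows "inj_on (\<lambda>d. (j + n - d) mod n) {..<k}"
  by (rule inj_on_inverseI[where g = "\<lambda>i. diagonal_index n i j"])
    (use assms diagonal_index_eq_iff_row in auto)

lemma band_array_row_card:
  assumes "k \<le> n" "i < n"
  shows "card {j. j < n \<and> band_array n k f i j \<noteq> None} = k"
  unfolding band_array_row_support[OF assms] by (simp add: card_image inj_on_band_row[OF assms])

lemma band_array_col_card:
  assumes "k \<le> n" "j < n"
  shows "card {i. i < n \<and> band_array n k f i j \<noteq> None} = k"
  unfolding band_array_col_support[OF assms] by (simp add: card_image inj_on_band_col[OF assms])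

lemma band_array_row_sum:
  assumes "k \<le> n" "i < n"
  shows "(\<Sum>j\<in>{j. j < n \<and> band_array n k f i j \<noteq> None}. the (band_array n k f i j)) = (\<Sum>d<k. f i d)"
  unfolding band_array_row_support[OF assms] sum.reindex[OF inj_on_band_row[OF assms]]
  using assms by (simp add: band_array_on_diagonal)

lemma band_array_col_sum:
  assumes "k \<le> n" "j < n"
  shows "(\<Sum>i\<in>{i. i < n \<and> band_array n k f i j \<noteq> None}. the (band_array n k f i j))
    = (\<Sum>d<k. f ((j + n - d) mod n) d)"
proof -
  have "band_array n k f ((j + n - d) mod n) j = Some (f ((j + n - d) mod n) d)" if "d < k" for d
    using assms that diagonal_index_eq_iff_row[of "(j + n - d) mod n" n j d]
    by (simp add: band_array_def)
  then show ?thesis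
    unfolding band_array_col_support[OF assms] sum.reindex[OF inj_on_band_col[OF assms]]
    by simp
qed

lemma band_array_nonzero:
  assumes "k \<le> n"
    and abs_image: "(\<lambda>(i, d). \<bar>f i d\<bar>) ` ({..<n} \<times> {..<k}) = {1..int n * int k}"
    and "band_array n k f i j = Some e"
  shows "e \<noteq> 0"
proof -
  from assms obtain d where "(i, d) \<in> {..<n} \<times> {..<k}" "e = f i d"
    using band_array_eq_Some_iff by auto
  then have "\<bar>e\<bar> \<in> {1..int n * int k}"
    unfolding abs_image[symmetric] by force
  then show ?thesis
    by auto
qed

lemma band_array_ex1_cell:
  assumes "k \<le> n"
    and abs_image: "(\<lambda>(i, d). \<bar>f i d\<bar>) ` ({..<n} \<times> {..<k}) = {1..int n * int k}"
    and "1 \<le> x" "x \<le> int n * int k"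
  shows "\<exists>!p. p \<in> {0..<n} \<times> {0..<n} \<and>
    (band_array n k f (fst p) (snd p) = Some x \<or> band_array n k f (fst p) (snd p) = Some (- x))"
proof -
  let ?A = "band_array n k f"
  have abs_inj: "inj_on (\<lambda>(i, d). \<bar>f i d\<bar>) ({..<n} \<times> {..<k})"
    by (rule eq_card_imp_inj_on) (simp_all add: abs_image card_cartesian_product nat_mult_distrib)
  have "x \<in> (\<lambda>(i, d). \<bar>f i d\<bar>) ` ({..<n} \<times> {..<k})"
    using assms(3,4) by (simp add: abs_image)
  then obtain i d where id: "i < n" "d < k" "\<bar>f i d\<bar> = x"
    by auto
  show ?thesis
  proof (rule ex1I[of _ "(i, (i + d) mod n)"])
    fix p assume p: "p \<in> {0..<n} \<times> {0..<n} \<and> (?A (fst p) (snd p) = Some x \<or> ?A (fst p) (snd p) = Some (- x))"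
    obtain a b where ab: "p = (a, b)"
      by (cases p)
    obtain e where e: "?A a b = Some e" "\<bar>e\<bar> = x"
      using p ab \<open>1 \<le> x\<close> by auto
    then obtain d' where d': "d' < k" "a < n" "b = (a + d') mod n" "e = f a d'"
      using band_array_eq_Some_iff[OF assms(1)] by blast
    have "(a, d') = (i, d)"
      using inj_onD[OF abs_inj, of "(a, d')" "(i, d)"] d' e id by auto
    with ab d' show "p = (i, (i + d) mod n)"
      by simp
  qed (use id assms(1) band_array_on_diagonal[OF assms(1)] in auto)
qed

lemma heffter_band_array:
  assumes "k \<le> n"
    and row_sums: "\<And>i. i < n \<Longrightarrow> (\<Sum>d<k. f i d) mod (2 * int n * int k + 1) = 0"
    and col_sums: "\<And>j. j < n \<Longrightarrow> (\<Sum>d<k. f ((j + n - d) mod n) d) mod (2 * int n * int k + 1) = 0"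
    and abs_image: "(\<lambda>(i, d). \<bar>f i d\<bar>) ` ({..<n} \<times> {..<k}) = {1..int n * int k}"
  shows "heffter n k (band_array n k f)"
  unfolding heffter_def
proof (intro conjI allI impI)
  let ?A = "band_array n k f"
  show "?A i j \<noteq> None \<Longrightarrow> i < n" "?A i j \<noteq> None \<Longrightarrow> j < n" for i j
    by (simp_all add: band_array_def split: if_splits)
  show "?A i j = Some e \<Longrightarrow> e \<noteq> 0" for i j e
    by (rule band_array_nonzero[OF assms(1) abs_image])
  show "card {j. j < n \<and> ?A i j \<noteq> None} = k" if "i < n" for i
    by (rule band_array_row_card[OF assms(1) that])
  show "card {i. i < n \<and> ?A i j \<noteq> None} = k" if "j < n" for j
    by (rule band_array_col_card[OF assms(1) that])
  show "(\<Sum>j\<in>{j. j < n \<and> ?A i j \<noteq> None}. the (?A i j)) mod (2 * int n * int k + 1) = 0"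
    if "i < n" for i
    unfolding band_array_row_sum[OF assms(1) that] by (rule row_sums[OF that])
  show "(\<Sum>i\<in>{i. i < n \<and> ?A i j \<noteq> None}. the (?A i j)) mod (2 * int n * int k + 1) = 0"
    if "j < n" for j
    unfolding band_array_col_sum[OF assms(1) that] by (rule col_sums[OF that])
  show "\<exists>!p. p \<in> {0..<n} \<times> {0..<n} \<and> (?A (fst p) (snd p) = Some x \<or> ?A (fst p) (snd p) = Some (- x))"
    if "1 \<le> x \<and> x \<le> int n * int k" for x
    using that band_array_ex1_cell[OF assms(1) abs_image] by blast
qed

lemma sum_lessThan_5: "(\<Sum>d<(5::nat). g d) = g 0 + g 1 + g 2 + g 3 + (g 4 :: 'a::comm_monoid_add)"
  by (simp add: eval_nat_numeral add.assoc)

definition even_row :: "nat \<Rightarrow> nat \<Rightarrow> nat \<Rightarrow> int" where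
  "even_row N a d = [1 + int a, 2 * int N + 1 + int a, - (5 * int N + 2 + 2 * int a),
     4 * int N + 1 + int a, - (int N + 1 + int a)] ! d"

definition odd_row :: "nat \<Rightarrow> nat \<Rightarrow> nat \<Rightarrow> int" where
  "odd_row N a d = [8 * int N - int a, - (10 * int N - int a), - (5 * int N + 1 + 2 * int a),
     - (4 * int N - int a), - (9 * int N - int a)] ! d"

definition row_entry :: "nat \<Rightarrow> nat \<Rightarrow> nat \<Rightarrow> int" where
  "row_entry N i = (if even i then even_row N (i div 2) else odd_row N (i div 2))"

definition heffter_entry :: "nat \<Rightarrow> nat \<Rightarrow> nat \<Rightarrow> int" where
  "heffter_entry N i d = row_entry N i (if i = 2 * N - 1 then transpose 1 4 d else d)"

lemma even_row_sum: "(\<Sum>d<5. even_row N a d) = 0"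
  by (simp add: sum_lessThan_5 even_row_def)

lemma odd_row_sum: "(\<Sum>d<5. odd_row N a d) = - (20 * int N + 1)"
  by (simp add: sum_lessThan_5 odd_row_def)

lemma row_entry_col_sum:
  assumes "4 \<le> j"
  shows "(\<Sum>d<5. row_entry N (j - d) d) = (if even j then - (20 * int N + 1) else 0)"
proof -
  have "\<exists>b. j = 2 * b + 4 \<or> j = 2 * b + 5"
    using assms by presburger
  then obtain b where "j = 2 * b + 4 \<or> j = 2 * b + 5" ..
  then show ?thesis
    by (elim disjE) (simp_all add: sum_lessThan_5 row_entry_def even_row_def odd_row_def)
qed

lemma heffter_entry_col_sum:
  assumes "N \<ge> 3" "j < 2 * N"
  shows "(\<Sum>d<5. heffter_entry N ((j + 2 * N - d) mod (2 * N)) d) \<in> {0, - (20 * int N + 1)}"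
proof (cases "4 \<le> j")
  case True
  have "heffter_entry N ((j + 2 * N - d) mod (2 * N)) d = row_entry N (j - d) d" if "d < 5" for d
    using assms True that by (auto simp: heffter_entry_def mod_add_sub_eq_if)
  then show ?thesis
    using row_entry_col_sum[OF True] by simp
next
  case False
  txt \<open>Writing \<open>N = M + 3\<close> lets the simplifier evaluate the wrapped row indices \<open>2N - 1, \<dots>, 2N - 4\<close>.\<close>
  obtain M where M: "N = M + 3"
    using assms(1) le_Suc_ex by (metis add.commute)
  from False have "j = 0 \<or> j = 1 \<or> j = 2 \<or> j = 3"
    by auto
  with assms(2) show ?thesis
    unfolding M by (auto simp: sum_lessThan_5 mod_add_sub_eq_if heffter_entry_def row_entry_def even_row_def odd_row_def)
qed

lemma row_entry_sum: "(\<Sum>d<5. row_entry N i d) \<in> {0, - (20 * int N + 1)}"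
  by (simp add: row_entry_def even_row_sum odd_row_sum)

lemma heffter_entry_row_sum: "(\<Sum>d<5. heffter_entry N i d) \<in> {0, - (20 * int N + 1)}"
proof -
  have "bij_betw (transpose 1 4) {..<5::nat} {..<5}"
    by simp
  then have "(\<Sum>d<5. heffter_entry N i d) = (\<Sum>d<5. row_entry N i d)"
    unfolding heffter_entry_def by (cases "i = 2 * N - 1") (simp_all add: sum.reindex_bij_betw)
  then show ?thesis
    using row_entry_sum by simp
qed

lemma row_entry_abs_bounds:
  assumes "i < 2 * N" "d < 5"
  shows "1 \<le> \<bar>row_entry N i d\<bar> \<and> \<bar>row_entry N i d\<bar> \<le> 10 * int N"
proof -
  have "i div 2 < N"
    using assms by simp
  with assms(2) show ?thesis
    by (auto simp: row_entry_def even_row_def odd_row_def less_Suc_eq numeral_eq_Suc)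
qed

lemma even_row_witness:
  assumes "a < N" "d < 5" "\<bar>even_row N a d\<bar> = x"
  shows "\<exists>i<2 * N. \<exists>d<5. \<bar>row_entry N i d\<bar> = x"
proof -
  have "2 * a < 2 * N" "row_entry N (2 * a) d = even_row N a d"
    using assms(1) by (simp_all add: row_entry_def)
  with assms(2,3) show ?thesis
    by metis
qed

lemma odd_row_witness:
  assumes "a < N" "d < 5" "\<bar>odd_row N a d\<bar> = x"
  shows "\<exists>i<2 * N. \<exists>d<5. \<bar>row_entry N i d\<bar> = x"
proof -
  have "2 * a + 1 < 2 * N" "row_entry N (2 * a + 1) d = odd_row N a d"
    using assms(1) by (simp_all add: row_entry_def)
  with assms(2,3) show ?thesis
    by metis
qed

lemma row_entry_abs_surj:
  assumes "1 \<le> x" "x \<le> 10 * int N"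
  shows "\<exists>i<2 * N. \<exists>d<5. \<bar>row_entry N i d\<bar> = x"
proof -
  consider "x \<le> int N" | "int N < x" "x \<le> 2 * int N" | "2 * int N < x" "x \<le> 3 * int N"
    | "3 * int N < x" "x \<le> 4 * int N" | "4 * int N < x" "x \<le> 5 * int N"
    | "5 * int N < x" "x \<le> 7 * int N" | "7 * int N < x" "x \<le> 8 * int N"
    | "8 * int N < x" "x \<le> 9 * int N" | "9 * int N < x"
    by linarith
  then show ?thesis
  proof cases
    case 1
    show ?thesis
      by (rule even_row_witness[of "nat (x - 1)" N 0]) (use 1 assms in \<open>simp_all add: even_row_def\<close>)
  next
    case 2
    show ?thesis
      by (rule even_row_witness[of "nat (x - int N - 1)" N 4]) (use 2 in \<open>simp_all add: even_row_def\<close>)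
  next
    case 3
    show ?thesis
      by (rule even_row_witness[of "nat (x - 2 * int N - 1)" N 1]) (use 3 in \<open>simp_all add: even_row_def\<close>)
  next
    case 4
    show ?thesis
      by (rule odd_row_witness[of "nat (4 * int N - x)" N 3]) (use 4 in \<open>simp_all add: odd_row_def\<close>)
  next
    case 5
    show ?thesis
      by (rule even_row_witness[of "nat (x - 4 * int N - 1)" N 3]) (use 5 in \<open>simp_all add: even_row_def\<close>)
  next
    case 6
    then have "\<exists>a. 0 \<le> a \<and> a < int N \<and> (x = 5 * int N + 1 + 2 * a \<or> x = 5 * int N + 2 + 2 * a)"
      by presburger
    then obtain a where a: "0 \<le> a" "a < int N" and "x = 5 * int N + 1 + 2 * a \<or> x = 5 * int N + 2 + 2 * a"
      by blast
    then consider "x = 5 * int N + 1 + 2 * a" | "x = 5 * int N + 2 + 2 * a"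
      by blast
    then show ?thesis
    proof cases
      case 1
      show ?thesis
        by (rule odd_row_witness[of "nat a" N 2]) (use 1 a in \<open>simp_all add: odd_row_def\<close>)
    next
      case 2
      show ?thesis
        by (rule even_row_witness[of "nat a" N 2]) (use 2 a in \<open>simp_all add: even_row_def\<close>)
    qed
  next
    case 7
    show ?thesis
      by (rule odd_row_witness[of "nat (8 * int N - x)" N 0]) (use 7 in \<open>simp_all add: odd_row_def\<close>)
  next
    case 8
    show ?thesis
      by (rule odd_row_witness[of "nat (9 * int N - x)" N 4]) (use 8 in \<open>simp_all add: odd_row_def\<close>)
  next
    case 9
    show ?thesis
      by (rule odd_row_witness[of "nat (10 * int N - x)" N 1]) (use 9 assms in \<open>simp_all add: odd_row_def\<close>)
  qed
qed

lemma heffter_entry_abs_image: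
  "(\<lambda>(i, d). \<bar>heffter_entry N i d\<bar>) ` ({..<2 * N} \<times> {..<5}) = {1..int (2 * N) * int 5}"
proof -
  let ?\<sigma> = "\<lambda>i d. if i = 2 * N - 1 then transpose 1 4 d else d"
  have \<sigma>_less: "?\<sigma> i d < 5" if "d < 5" for i d :: nat
    using that by (simp add: transpose_def)
  show ?thesis
  proof (intro set_eqI iffI)
    fix x assume "x \<in> (\<lambda>(i, d). \<bar>heffter_entry N i d\<bar>) ` ({..<2 * N} \<times> {..<5})"
    then obtain i d where "i < 2 * N" "d < 5" "x = \<bar>row_entry N i (?\<sigma> i d)\<bar>"
      by (auto simp: heffter_entry_def)
    then show "x \<in> {1..int (2 * N) * int 5}"
      using row_entry_abs_bounds[of i N "?\<sigma> i d"] \<sigma>_less by auto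
  next
    fix x assume "x \<in> {1..int (2 * N) * int 5}"
    then obtain i d where "i < 2 * N" "d < 5" "\<bar>row_entry N i d\<bar> = x"
      using row_entry_abs_surj[of x N] by auto
    moreover have "heffter_entry N i (?\<sigma> i d) = row_entry N i d"
      by (simp add: heffter_entry_def)
    ultimately show "x \<in> (\<lambda>(i, d). \<bar>heffter_entry N i d\<bar>) ` ({..<2 * N} \<times> {..<5})"
      using \<sigma>_less by (intro image_eqI[of _ _ "(i, ?\<sigma> i d)"]) auto
  qed
qed

lemma heffter_band_array_heffter_entry:
  assumes "N \<ge> 3"
  shows "heffter (2 * N) 5 (band_array (2 * N) 5 (heffter_entry N))"
proof (rule heffter_band_array)
  have modulus: "2 * int (2 * N) * int 5 + 1 = 20 * int N + 1"
    by simp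
  have mod_0: "x mod m = 0" if "x \<in> {0, - m}" for x m :: int
    using that by auto
  show "(\<Sum>d<5. heffter_entry N i d) mod (2 * int (2 * N) * int 5 + 1) = 0" for i
    unfolding modulus by (rule mod_0[OF heffter_entry_row_sum])
  show "(\<Sum>d<5. heffter_entry N ((j + 2 * N - d) mod (2 * N)) d) mod (2 * int (2 * N) * int 5 + 1) = 0"
    if "j < 2 * N" for j
    unfolding modulus by (rule mod_0[OF heffter_entry_col_sum[OF assms that]])
qed (use assms heffter_entry_abs_image in auto)

theorem lemma7p1:
  fixes n :: nat
  assumes "n mod 4 = 2" and "n \<ge> 6"
  shows "heffter_exists n 5"
proof -
  define N where "N = n div 2"
  have "n = 2 * N" "N \<ge> 3"
    using assms unfolding N_def by presburger+
  then show ?thesis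
    unfolding heffter_exists_def using heffter_band_array_heffter_entry by blast
qed

end
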